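(* Assume (A) and (D), and that for some $\omega\ge0$ the potential profile satisfies: for every $c>0$ and $\lambda\ge1$, $\limsup_{s\to0^+}\frac{g(f^{-1}(cs^\lambda))}{g(f^{-1}(s))}\le\lambda^\omega$. Fix $t>0$. Let $\eta,\sigma:[0,\infty)\to(0,\infty)$ be continuous increasing functions with $1/\eta\in L^1((1,\infty),dx)$, $\sigma(r)<r$ for $r\ge1$, $\sup_{r\ge1}f(\sigma(r))/f(r)<\infty$, and such that $r\mapsto\frac{(d-1)\log r+\log\eta(r)}{|\log f(r)|}$ is eventually decreasing with $$b:=\lim_{r\to\infty}\frac{(d-1)\log r+\log\eta(r)}{|\log f(r)|}\in[0,2).$$ Let $H_t(r)=f^2(r)r^{d-1}\eta(r)\exp(\widetilde Ktg(r))$, $\widetilde w_t(r)=g^2(r)\exp(\widetilde Ktg(r))$, $v_t(r)=\widetilde w_t(r)\frac{\eta(r)}{r-\sigma(r)}$. Let $\kappa,\widetilde\kappa>0$, $\alpha_t(u)=(f^2)^{-1}(\kappa/u)$ and $\gamma_t(u)=H_t^{-1}(\widetilde\kappa/u)$ for $u$ large enough, $H_t^{-1}$ being the inverse of $H_t$ restricted to a half-line on which it is continuous and strictly decreasing (such a half-line exists). (a) For every $\varepsilon\in(0,2-b)$ there is $r_\varepsilon>0$ with $f^2(r)\le H_t(r)\le f^{2-b-\varepsilon}(r)$ for $r>r_\varepsilon$; moreover $$1\le\liminf_{u\to\infty}\frac{g(\gamma_t(u))}{g(\alpha_t(u))}\le\limsup_{u\to\infty}\frac{g(\gamma_t(u))}{g(\alpha_t(u))}\le\Big(\frac{2}{2-b}\Big)^{\omega},$$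 and for every $\delta>0$, $\lim_{u\to\infty}\widetilde w_t(\gamma_t(u))/u^\delta=0$. (b) If in addition $\lim_{r\to\infty}\frac{\log\eta(r)-\log(r-\sigma(r))}{g(r)}=0$, then $$\lim_{u\to\infty}\frac{\log\eta(\gamma_t(u))-\log(\gamma_t(u)-\sigma(\gamma_t(u)))}{g(\alpha_t(u))}=0$$ and for every $\delta>0$, $\lim_{u\to\infty}v_t(\gamma_t(u))/u^\delta=0$.
   Context: Setting. Fix $d\ge1$. Let $A$ be a positive semidefinite $d\times d$ matrix and $\nu$ a symmetric Lévy measure on $\mathbb R^d\setminus\{0\}$ (positive Radon measure with $\int(1\wedge|z|^2)\,\nu(dz)<\infty$, $\nu(-B)=\nu(B)$) with $\nu(\mathbb R^d\setminus\{0\})=\infty$, absolutely continuous with density also denoted $\nu(x)$. The Lévy operator $L$ on $L^2(dx)$ is the Fourier multiplier $\widehat{Lh}(\xi)=-\Psi(\xi)\widehat h(\xi)$ with $\Psi(\xi)=\tfrac12A\xi\cdot\xi+\int(1-\cos(\xi\cdot z))\,\nu(dz)$; $\{P_t\}_{t\ge0}$ is the associated convolution semigroup, $P_th(x)=\int p_t(y-x)h(y)\,dy$ with densities $p_t$. Let $V$ be locally bounded on $\mathbb R^d$ with $V(x)\to\infty$ as $|x|\to\infty$, and let $H=-L+V$ (self-adjoint, bounded below, defined via quadratic forms on $L^2(dx)$). For $t>0$, $e^{-tH}$ has a continuous, positive, symmetric kernel $u_t(x,y)$. Let $\lambda_0=\inf\sigma(H)$ (a simple eigenvalue) and $\varphi_0$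 the corresponding strictly positive, continuous, bounded eigenfunction with $\|\varphi_0\|_{L^2(dx)}=1$. Set $\mu(dx)=\varphi_0^2(x)\,dx$ (a probability measure), $q_t(x,y)=\dfrac{e^{\lambda_0t}u_t(x,y)}{\varphi_0(x)\varphi_0(y)}$ and $Q_th(x)=\int q_t(x,y)h(y)\,\mu(dy)$; $\{Q_t\}$ is a semigroup of contractions on every $L^p(\mu)$, $1\le p\le\infty$, and $q_t$ is symmetric. Assumption (A): there exist a strictly decreasing continuous $f:(0,\infty)\to(0,\infty)$, a strictly increasing continuous $g:[0,\infty)\to(0,\infty)$, constants $C_1,C_2\ge1$ and $R_0>0$ such that $C_1^{-1}f(|x|)\le\nu(x)\le C_1f(|x|)$ for $x\ne0$ and $C_2^{-1}g(|x|)\le V(x)\le C_2g(|x|)$ for $|x|\ge R_0$, and moreover: (A1) there is $C_3>0$ with $\int_{\{|x-y|>1,\,|y|>1\}}f(|x-y|)f(|y|)\,dy\le C_3f(|x|)$ for $|x|\ge1$; (A2) $(t,x)\mapsto p_t(x)$ is continuous on $(0,\infty)\times\mathbb R^d$ and for every $t_b>0$ there are $C_4,C_5>0$ with $p_t(x)\le C_4\big([e^{C_5t}f(|x|)]\wedge1\big)$ for $x\neq0$, $t\ge t_b$, and $\sup_{t\in(0,t_b]}\sup_{r\le|x|\le2}p_t(x)<\infty$ for every $r\in(0,1]$; (A3) there is $C_6\ge1$ with $g(r+1)\le C_6g(r)$ for $r\ge R_0$. Under (A), $f$ is a bijection of $(0,\infty)$ onto $(0,\infty)$ and $f^{-1}$,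 $(f^2)^{-1}$ denote the inverses. We write $f_1=f\wedge1$. Condition (D): the map $r\mapsto g(r)/|\log f(r)|$ is eventually decreasing and $\lim_{r\to\infty}g(r)/|\log f(r)|=0$. Heat kernel estimate (a known consequence of (A), used as standing input): for every $T>0$ there exist $\rho>1$, $C=C(T)>0$ and constants $K,\widetilde K>0$ independent of $T$ such that for all $x,y\in\mathbb R^d$ and $t\ge T$, $C^{-1}\max\{1,e^{\lambda_0t}\Gamma(\widetilde Kt,x,y)\}\le q_t(x,y)\le C\max\{1,e^{\lambda_0t}\Gamma(Kt,x,y)\}$, where $\Gamma(\tau,x,y)=\dfrac{\mathbf 1_{\{|x|,|y|>\rho\}}}{f_1(|x|)f_1(|y|)}\displaystyle\int_{\rho-1<|z|<|x|\vee|y|}f_1(|x-z|)f_1(|z-y|)e^{-\tau g(|z|)}\,dz$. Throughout, $K$ and $\widetilde K$ denote fixed constants for which this two-sided estimate holds. *)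

theory Defs
  imports "HOL-Analysis.Analysis"
begin

definition pos_inv :: "(real \<Rightarrow> real) \<Rightarrow> real \<Rightarrow> real" where
  "pos_inv h s = inv_into {0<..} h s"

definition H_fun :: "nat \<Rightarrow> real \<Rightarrow> real \<Rightarrow> (real \<Rightarrow> real) \<Rightarrow> (real \<Rightarrow> real) \<Rightarrow> (real \<Rightarrow> real) \<Rightarrow> real \<Rightarrow> real" where
  "H_fun d Kt t f g \<eta> r = (f r)^2 * r^(d - 1) * \<eta> r * exp (Kt * t * g r)"

definition w_fun :: "real \<Rightarrow> real \<Rightarrow> (real \<Rightarrow> real) \<Rightarrow> real \<Rightarrow> real" where
  "w_fun Kt t g r = (g r)^2 * exp (Kt * t * g r)"

definition v_fun :: "real \<Rightarrow> real \<Rightarrow> (real \<Rightarrow> real) \<Rightarrow> (real \<Rightarrow> real) \<Rightarrow> (real \<Rightarrow> real) \<Rightarrow> real \<Rightarrow> real" where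
  "v_fun Kt t g \<eta> \<sigma> r = w_fun Kt t g r * \<eta> r / (r - \<sigma> r)"

end

theory Submission
  imports Defs
begin

(* Put E(r) = 2 - ((d - 1) ln r + ln eta(r)) / |ln f(r)| - Kt t g(r) / |ln f(r)| (H_exponent
   below). Then H_t = f^E wherever f < 1, and by (D) and the hypotheses defining b the exponent
   E is eventually increasing with limit 2 - b. Hence H_t is eventually strictly decreasing, lies
   between f^2 and f^(2 - b - eps), and exp(A g) H_t^delta = f^(delta E - A g / |ln f|) tends to 0.
   Since H_t(gamma_t(u)) = kappa'/u, these bounds give
   f^-1(sqrt(kappa'/u)) <= gamma_t(u) <= f^-1((kappa'/u)^(1/(2 - b - eps))), while
   alpha_t(u) = f^-1(sqrt(kappa/u)); the growth condition on g o f^-1 then controls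
   g(gamma_t)/g(alpha_t), and u^-delta = (H_t(gamma_t)/kappa')^delta turns exponential bounds on
   wtilde_t and v_t into the limits. *)

lemma pos_inv_bij_betw:
  assumes "bij_betw h {0<..} {0<..}" and "s > 0"
  shows "pos_inv h s > 0" and "h (pos_inv h s) = s"
proof -
  have s: "s \<in> h ` {0<..}"
    using assms by (simp add: bij_betw_def)
  show "pos_inv h s > 0"
    unfolding pos_inv_def using inv_into_into[OF s] by simp
  show "h (pos_inv h s) = s"
    unfolding pos_inv_def by (rule f_inv_into_f[OF s])
qed

lemma strict_antimono_on_le_iff:
  fixes h :: "'a::linorder \<Rightarrow> 'b::linorder"
  assumes "strict_antimono_on S h" and "x \<in> S" and "y \<in> S"
  shows "h x \<le> h y \<longleftrightarrow> y \<le> x"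
proof -
  have "x < y \<Longrightarrow> h y < h x" and "y < x \<Longrightarrow> h x < h y"
    using assms by (auto simp: monotone_on_def)
  then show ?thesis
    by (cases x y rule: linorder_cases) auto
qed

lemma pos_inv_le_iff:
  assumes anti: "strict_antimono_on {0<..} h" and bij: "bij_betw h {0<..} {0<..}"
    and "r > 0" and "s > 0"
  shows "pos_inv h s \<le> r \<longleftrightarrow> h r \<le> s"
    and "r \<le> pos_inv h s \<longleftrightarrow> s \<le> h r"
  using strict_antimono_on_le_iff[OF anti, of r "pos_inv h s"]
    strict_antimono_on_le_iff[OF anti, of "pos_inv h s" r] pos_inv_bij_betw[OF bij \<open>s > 0\<close>] \<open>r > 0\<close>
  by auto

lemma pos_inv_power2:
  assumes bij: "bij_betw h {0<..} {0<..}" and "s > 0"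
  shows "pos_inv (\<lambda>r. (h r)\<^sup>2) s = pos_inv h (sqrt s)"
proof -
  have "inj_on (\<lambda>r. (h r)\<^sup>2) {0<..}"
  proof (rule inj_onI)
    fix x y :: real
    assume "x \<in> {0<..}" "y \<in> {0<..}" "(h x)\<^sup>2 = (h y)\<^sup>2"
    moreover have "h x > 0" "h y > 0"
      using bij \<open>x \<in> {0<..}\<close> \<open>y \<in> {0<..}\<close> by (auto simp: bij_betw_def)
    ultimately show "x = y"
      using bij by (auto simp: bij_betw_def inj_on_def)
  qed
  then show ?thesis
    unfolding pos_inv_def[of "\<lambda>r. (h r)\<^sup>2"]
    by (rule inv_into_f_eq) (use pos_inv_bij_betw[OF bij, of "sqrt s"] \<open>s > 0\<close> in auto)
qed

lemma strict_antimono_bij_tendsto_zero: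
  fixes h :: "real \<Rightarrow> real"
  assumes anti: "strict_antimono_on {0<..} h" and bij: "bij_betw h {0<..} {0<..}"
  shows "(h \<longlongrightarrow> 0) at_top"
proof (rule order_tendstoI)
  fix a :: real
  assume "a < 0"
  have above: "a < h x" if "x > 0" for x
    using bij_betw_apply[OF bij, of x] that \<open>a < 0\<close> by simp
  show "eventually (\<lambda>x. a < h x) at_top"
    using eventually_gt_at_top[of "0::real"] by (rule eventually_mono) (rule above)
next
  fix a :: real
  assume "0 < a"
  have below: "h x < a" if "x > pos_inv h a" for x
    using monotone_onD[OF anti, of "pos_inv h a" x] that pos_inv_bij_betw[OF bij \<open>0 < a\<close>]
    by simp
  show "eventually (\<lambda>x. h x < a) at_top"
    using eventually_gt_at_top[of "pos_inv h a"] by (rule eventually_mono) (rule below)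
qed

lemma filterlim_at_top_if_integrable_inverse:
  fixes \<eta> :: "real \<Rightarrow> real"
  assumes mono: "mono_on {0..} \<eta>" and pos: "\<And>r. r \<ge> 0 \<Longrightarrow> \<eta> r > 0"
    and int: "set_integrable lborel {1<..} (\<lambda>x. 1 / \<eta> x)"
  shows "filterlim \<eta> at_top at_top"
  unfolding filterlim_at_top_gt[where c = 0]
proof (intro allI impI)
  fix Z :: real
  assume "Z > 0"
  show "eventually (\<lambda>r. Z \<le> \<eta> r) at_top"
  proof (rule ccontr)
    assume "\<not> eventually (\<lambda>r. Z \<le> \<eta> r) at_top"
    have small: "\<eta> r < Z" if "r \<ge> 0" for r
    proof (rule ccontr)
      assume "\<not> \<eta> r < Z"
      then have "Z \<le> \<eta> s" if "s \<ge> r" for s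
        using mono_onD[OF mono, of r s] \<open>r \<ge> 0\<close> that by simp
      then show False
        using \<open>\<not> eventually (\<lambda>r. Z \<le> \<eta> r) at_top\<close> by (auto simp: eventually_at_top_linorder)
    qed
    have "set_integrable lborel {1<..} (\<lambda>_::real. 1::real)"
    proof (rule set_integrable_bound)
      show "set_integrable lborel {1<..} (\<lambda>x. Z * (1 / \<eta> x))"
        using set_integrable_mult_right[of Z lborel "{1<..}", OF int] .
      show "set_borel_measurable lborel {1<..} (\<lambda>_::real. 1::real)"
        by (simp add: set_borel_measurable_def)
      have "norm (1::real) \<le> norm (Z * (1 / \<eta> x))" if "x > 1" for x
        using small[of x] pos[of x] that by simp
      then show "AE x in lborel. x \<in> {1<..} \<longrightarrow> norm (1::real) \<le> norm (Z * (1 / \<eta> x))"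
        by (intro AE_I2) simp
    qed
    then have "emeasure lborel {1::real<..} < \<infinity>"
      by (simp add: set_integrable_def integrable_indicator_iff)
    then obtain m where m: "emeasure lborel {1::real<..} = ennreal m" "m \<ge> 0"
      using ennreal_cases by (metis infinity_ennreal_def less_irrefl)
    have "emeasure lborel {2::real..m + 3} \<le> emeasure lborel {1::real<..}"
      by (rule emeasure_mono) auto
    then have "ennreal (m + 1) \<le> ennreal m"
      using m by simp
    then show False
      using m by simp
  qed
qed

lemma strict_antimono_on_powr:
  fixes h Q :: "real \<Rightarrow> real"
  assumes h_anti: "strict_antimono_on S h" and h_range: "\<And>r. r \<in> S \<Longrightarrow> 0 < h r \<and> h r < 1"
    and Q_mono: "mono_on S Q" and Q_pos: "\<And>r. r \<in> S \<Longrightarrow> Q r > 0"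
  shows "strict_antimono_on S (\<lambda>r. h r powr Q r)"
proof (rule monotone_onI)
  fix r s
  assume "r \<in> S" "s \<in> S" "r < s"
  then have "h s powr Q s \<le> h s powr Q r"
    using h_range[of s] mono_onD[OF Q_mono] by (intro powr_mono') auto
  also have "\<dots> < h r powr Q r"
    using h_anti h_range[of s] Q_pos[of r] \<open>r \<in> S\<close> \<open>s \<in> S\<close> \<open>r < s\<close>
    by (intro powr_less_mono2) (auto simp: monotone_on_def)
  finally show "h s powr Q s < h r powr Q r" .
qed

lemma strict_antimono_tendsto_zero_imp_pos:
  fixes H :: "real \<Rightarrow> real"
  assumes anti: "strict_antimono_on {R..} H" and lim: "(H \<longlongrightarrow> 0) at_top" and "R \<le> x"
  shows "H x > 0"
proof -
  have "eventually (\<lambda>s. H s \<le> H (x + 1)) at_top"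
    using eventually_ge_at_top[of "x + 1"] anti \<open>R \<le> x\<close>
    by (auto elim!: eventually_mono simp: monotone_on_def le_less)
  then have "0 \<le> H (x + 1)"
    using lim by (intro tendsto_upperbound) auto
  also have "H (x + 1) < H x"
    using anti \<open>R \<le> x\<close> by (auto simp: monotone_on_def)
  finally show ?thesis .
qed

lemma inv_into_halfline_eventually:
  fixes H :: "real \<Rightarrow> real" and y :: "'a \<Rightarrow> real"
  assumes cont: "continuous_on {R..} H" and anti: "strict_antimono_on {R..} H"
    and lim: "(H \<longlongrightarrow> 0) at_top" and y: "filterlim y (at_right 0) F"
  shows "eventually (\<lambda>u. R \<le> inv_into {R..} H (y u) \<and> H (inv_into {R..} H (y u)) = y u) F"
proof -
  have "eventually (\<lambda>u. 0 < y u \<and> y u < H R) F"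
    using y strict_antimono_tendsto_zero_imp_pos[OF anti lim order.refl]
    by (auto simp: filterlim_at_right_to_0 eventually_conj_iff filterlim_at elim: order_tendstoD)
  then show ?thesis
  proof (rule eventually_mono)
    fix u
    assume "0 < y u \<and> y u < H R"
    obtain N0 where "\<forall>n\<ge>N0. H n < y u"
      using order_tendstoD(2)[OF lim, of "y u"] \<open>0 < y u \<and> y u < H R\<close>
      by (auto simp: eventually_at_top_linorder)
    define N where "N = max N0 R"
    have "R \<le> N" "H N < y u"
      using \<open>\<forall>n\<ge>N0. H n < y u\<close> by (auto simp: N_def)
    moreover have "continuous_on {R..N} H"
      using cont by (rule continuous_on_subset) auto
    ultimately have "\<exists>x. R \<le> x \<and> x \<le> N \<and> H x = y u"
      using \<open>0 < y u \<and> y u < H R\<close> by (intro IVT2') auto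
    then have "y u \<in> H ` {R..}"
      by force
    then show "R \<le> inv_into {R..} H (y u) \<and> H (inv_into {R..} H (y u)) = y u"
      using inv_into_into[of "y u" H "{R..}"] f_inv_into_f[of "y u" H "{R..}"] by simp
  qed
qed

lemma filterlim_inv_into_halfline:
  fixes H :: "real \<Rightarrow> real" and y :: "'a \<Rightarrow> real"
  assumes cont: "continuous_on {R..} H" and anti: "strict_antimono_on {R..} H"
    and lim: "(H \<longlongrightarrow> 0) at_top" and y: "filterlim y (at_right 0) F"
  shows "filterlim (\<lambda>u. inv_into {R..} H (y u)) at_top F"
  unfolding filterlim_at_top
proof
  fix Z
  define M where "M = max Z R"
  have "H M > 0"
    using strict_antimono_tendsto_zero_imp_pos[OF anti lim] by (simp add: M_def)
  then have "eventually (\<lambda>u. y u < H M) F"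
    using y by (auto simp: filterlim_at elim: order_tendstoD)
  with inv_into_halfline_eventually[OF assms]
  show "eventually (\<lambda>u. Z \<le> inv_into {R..} H (y u)) F"
  proof eventually_elim
    case (elim u)
    show ?case
    proof (rule ccontr)
      assume "\<not> Z \<le> inv_into {R..} H (y u)"
      then have "inv_into {R..} H (y u) < M"
        by (simp add: M_def)
      then have "H M < y u"
        using monotone_onD[OF anti, of "inv_into {R..} H (y u)" M] elim by (simp add: M_def)
      with elim show False
        by simp
    qed
  qed
qed

lemma Limsup_compose_le:
  fixes h :: "_ \<Rightarrow> 'b::complete_linorder"
  assumes "filterlim s G F"
  shows "Limsup F (\<lambda>x. h (s x)) \<le> Limsup G h"
  unfolding Limsup_le_iff
  using assms by (auto simp: filterlim_iff dest: Limsup_lessD)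

lemma one_le_Liminf_if_Limsup_inverse_le_one:
  fixes r :: "_ \<Rightarrow> real"
  assumes pos: "eventually (\<lambda>x. r x > 0) F" and inv: "Limsup F (\<lambda>x. ereal (1 / r x)) \<le> 1"
  shows "1 \<le> Liminf F (\<lambda>x. ereal (r x))"
  unfolding le_Liminf_iff
proof (intro allI impI)
  fix y :: ereal
  assume "y < 1"
  show "eventually (\<lambda>x. y < ereal (r x)) F"
  proof (cases "y \<le> 0")
    case True
    with pos show ?thesis
      by (auto elim!: eventually_mono intro: le_less_trans)
  next
    case False
    with \<open>y < 1\<close> obtain c where c: "y = ereal c" "0 < c" "c < 1"
      by (cases y) auto
    then have "Limsup F (\<lambda>x. ereal (1 / r x)) < ereal (1 / c)"
      using inv by (auto intro: order.strict_trans1)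
    from Limsup_lessD[OF this] pos show ?thesis
    proof eventually_elim
      case (elim x)
      then show ?case
        using c by (simp add: field_simps)
    qed
  qed
qed

lemma power2_le_exp_double:
  fixes x :: real
  assumes "0 \<le> x"
  shows "x\<^sup>2 \<le> exp (2 * x)"
proof -
  have "x \<le> exp x"
    using exp_ge_add_one_self[of x] by linarith
  then have "x\<^sup>2 \<le> (exp x)\<^sup>2"
    using assms by (intro power_mono) auto
  then show ?thesis
    by (simp add: exp_double[symmetric] power2_eq_square exp_add[symmetric])
qed

lemma filterlim_const_divide_at_right_0:
  fixes c :: real
  assumes "c > 0"
  shows "filterlim (\<lambda>x. c / x) (at_right 0) at_top"
  unfolding filterlim_at
proof
  show "eventually (\<lambda>x. c / x \<in> {0<..} \<and> c / x \<noteq> 0) at_top"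
    using eventually_gt_at_top[of 0] by (rule eventually_mono) (use assms in simp)
  show "((\<lambda>x. c / x) \<longlongrightarrow> 0) at_top"
    by (intro tendsto_divide_0[OF tendsto_const] filterlim_at_top_imp_at_infinity filterlim_ident)
qed

lemma filterlim_sqrt_at_right_0:
  assumes "filterlim y (at_right 0) F"
  shows "filterlim (\<lambda>x. sqrt (y x)) (at_right 0) F"
  using assms tendsto_real_sqrt[of y 0 F] unfolding filterlim_at
  by (auto elim: eventually_mono)

lemma w_fun_le_exp:
  assumes "0 \<le> g r"
  shows "w_fun Kt t g r \<le> exp ((2 + Kt * t) * g r)"
proof -
  have "(g r)\<^sup>2 * exp (Kt * t * g r) \<le> exp (2 * g r) * exp (Kt * t * g r)"
    using power2_le_exp_double[OF assms] by (intro mult_right_mono) auto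
  then show ?thesis
    by (simp add: w_fun_def exp_add[symmetric] algebra_simps)
qed

lemma v_fun_le_exp:
  assumes "0 \<le> g r" and "0 < \<eta> r" and "\<sigma> r < r" and "ln (\<eta> r) - ln (r - \<sigma> r) \<le> g r"
  shows "v_fun Kt t g \<eta> \<sigma> r \<le> exp ((3 + Kt * t) * g r)"
proof -
  have "\<eta> r / (r - \<sigma> r) = exp (ln (\<eta> r) - ln (r - \<sigma> r))"
    using assms by (simp add: exp_diff)
  also have "\<dots> \<le> exp (g r)"
    using assms by simp
  finally have "w_fun Kt t g r * (\<eta> r / (r - \<sigma> r)) \<le> exp ((2 + Kt * t) * g r) * exp (g r)"
    using w_fun_le_exp[of g r] assms by (intro mult_mono) (auto simp: w_fun_def)
  then show ?thesis
    by (simp add: v_fun_def exp_add[symmetric] algebra_simps)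
qed

locale H_profile =
  fixes d :: nat and Kt t b :: real and f g \<eta> :: "real \<Rightarrow> real"
  assumes d_pos: "d \<ge> 1"
    and Ktt_pos: "Kt * t > 0"
    and f_cont: "continuous_on {0<..} f"
    and f_decr: "strict_antimono_on {0<..} f"
    and f_bij: "bij_betw f {0<..} {0<..}"
    and g_pos: "\<And>r. r \<ge> 0 \<Longrightarrow> g r > 0"
    and g_cont: "continuous_on {0..} g"
    and eta_pos: "\<And>r. r \<ge> 0 \<Longrightarrow> \<eta> r > 0"
    and eta_cont: "continuous_on {0..} \<eta>"
    and eta_ge_1: "eventually (\<lambda>r. 1 \<le> \<eta> r) at_top"
    and D_mono: "\<exists>r0. \<forall>r\<ge>r0. \<forall>s\<ge>r. g s / \<bar>ln (f s)\<bar> \<le> g r / \<bar>ln (f r)\<bar>"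
    and D_lim: "((\<lambda>r. g r / \<bar>ln (f r)\<bar>) \<longlongrightarrow> 0) at_top"
    and b_mono: "\<exists>r0. \<forall>r\<ge>r0. \<forall>s\<ge>r.
        ((real d - 1) * ln s + ln (\<eta> s)) / \<bar>ln (f s)\<bar>
          \<le> ((real d - 1) * ln r + ln (\<eta> r)) / \<bar>ln (f r)\<bar>"
    and b_lim: "((\<lambda>r. ((real d - 1) * ln r + ln (\<eta> r)) / \<bar>ln (f r)\<bar>) \<longlongrightarrow> b) at_top"
    and b_range: "0 \<le> b" "b < 2"
begin

abbreviation H :: "real \<Rightarrow> real" where
  "H \<equiv> H_fun d Kt t f g \<eta>"

definition H_exponent :: "real \<Rightarrow> real" where
  "H_exponent r = 2 - ((real d - 1) * ln r + ln (\<eta> r)) / \<bar>ln (f r)\<bar> - Kt * t * (g r / \<bar>ln (f r)\<bar>)"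

lemma f_pos: "r > 0 \<Longrightarrow> f r > 0"
  using bij_betw_apply[OF f_bij, of r] by simp

lemma f_tendsto_0: "(f \<longlongrightarrow> 0) at_top"
  by (rule strict_antimono_bij_tendsto_zero[OF f_decr f_bij])

lemma eventually_f_less_1: "eventually (\<lambda>r. 0 < r \<and> f r < 1) at_top"
  using order_tendstoD(2)[OF f_tendsto_0, of 1] eventually_gt_at_top[of 0]
  by (auto simp: eventually_conj_iff)

lemma H_exponent_tendsto: "(H_exponent \<longlongrightarrow> 2 - b) at_top"
proof -
  have "((\<lambda>r. 2 - ((real d - 1) * ln r + ln (\<eta> r)) / \<bar>ln (f r)\<bar> - Kt * t * (g r / \<bar>ln (f r)\<bar>))
      \<longlongrightarrow> 2 - b - Kt * t * 0) at_top"
    by (intro tendsto_intros b_lim D_lim)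
  then show ?thesis
    by (simp add: H_exponent_def[abs_def])
qed

lemma H_eq_powr:
  assumes "r > 0" and "f r < 1"
  shows "H r = f r powr H_exponent r"
proof -
  have fr: "0 < f r" "ln (f r) < 0"
    using f_pos[of r] assms by auto
  have er: "\<eta> r > 0"
    using eta_pos[of r] assms by simp
  have "ln (H r) = ln ((f r)\<^sup>2) + ln (r ^ (d - 1)) + ln (\<eta> r) + Kt * t * g r"
    using fr er assms by (simp add: H_fun_def ln_mult)
  also have "\<dots> = 2 * ln (f r) + (real d - 1) * ln r + ln (\<eta> r) + Kt * t * g r"
    using fr assms d_pos by (simp add: ln_realpow)
  also have "\<dots> = H_exponent r * ln (f r)"
    using fr by (simp add: H_exponent_def field_simps)
  finally have "f r powr H_exponent r = exp (ln (H r))"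
    using fr by (simp add: powr_def)
  moreover have "H r > 0"
    using fr er assms by (simp add: H_fun_def)
  ultimately show ?thesis
    by simp
qed

lemma eventually_H_eq_powr: "eventually (\<lambda>r. H r = f r powr H_exponent r) at_top"
  using eventually_f_less_1 by (auto elim!: eventually_mono intro: H_eq_powr)

lemma H_tendsto_0: "(H \<longlongrightarrow> 0) at_top"
proof -
  have "((\<lambda>r. f r powr H_exponent r) \<longlongrightarrow> 0 powr (2 - b)) at_top"
    using f_tendsto_0 H_exponent_tendsto b_range eventually_f_less_1
    by (intro tendsto_powr') (auto elim!: eventually_mono intro: less_imp_le f_pos)
  then show ?thesis
    using b_range eventually_H_eq_powr by (simp add: tendsto_cong)
qed

lemma H_exponent_eventually_mono: "\<exists>R. mono_on {R..} H_exponent"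
proof -
  obtain r1 where r1: "\<forall>r\<ge>r1. \<forall>s\<ge>r. g s / \<bar>ln (f s)\<bar> \<le> g r / \<bar>ln (f r)\<bar>"
    using D_mono by blast
  obtain r2 where r2: "\<forall>r\<ge>r2. \<forall>s\<ge>r.
      ((real d - 1) * ln s + ln (\<eta> s)) / \<bar>ln (f s)\<bar> \<le> ((real d - 1) * ln r + ln (\<eta> r)) / \<bar>ln (f r)\<bar>"
    using b_mono by blast
  have "H_exponent r \<le> H_exponent s" if "max r1 r2 \<le> r" "r \<le> s" for r s
  proof -
    have "((real d - 1) * ln s + ln (\<eta> s)) / \<bar>ln (f s)\<bar> \<le> ((real d - 1) * ln r + ln (\<eta> r)) / \<bar>ln (f r)\<bar>"
      using r2 that by simp
    moreover have "Kt * t * (g s / \<bar>ln (f s)\<bar>) \<le> Kt * t * (g r / \<bar>ln (f r)\<bar>)"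
      using r1 that Ktt_pos by (intro mult_left_mono) auto
    ultimately show ?thesis
      unfolding H_exponent_def by linarith
  qed
  then show ?thesis
    by (auto intro!: exI[of _ "max r1 r2"] mono_onI)
qed

lemma ex_halfline_strict_antimono: "\<exists>R. continuous_on {R..} H \<and> strict_antimono_on {R..} H"
proof -
  obtain R0 where R0: "mono_on {R0..} H_exponent"
    using H_exponent_eventually_mono by blast
  have "eventually (\<lambda>r. (0 < r \<and> f r < 1) \<and> H_exponent r > 0) at_top"
    using eventually_f_less_1 order_tendstoD(1)[OF H_exponent_tendsto, of 0] b_range
    by (auto simp: eventually_conj_iff)
  then obtain R1 where R1: "\<And>r. r \<ge> R1 \<Longrightarrow> (0 < r \<and> f r < 1) \<and> H_exponent r > 0"
    by (auto simp: eventually_at_top_linorder)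
  define R where "R = max R0 R1"
  have "strict_antimono_on {R..} (\<lambda>r. f r powr H_exponent r)"
  proof (rule strict_antimono_on_powr)
    show "strict_antimono_on {R..} f"
      using f_decr R1 by (auto simp: R_def monotone_on_def)
    show "mono_on {R..} H_exponent"
      using R0 by (rule mono_on_subset) (auto simp: R_def)
  qed (use R1 f_pos in \<open>auto simp: R_def\<close>)
  moreover have "H r = f r powr H_exponent r" if "r \<in> {R..}" for r
    using R1 that by (intro H_eq_powr) (auto simp: R_def)
  ultimately have "strict_antimono_on {R..} H"
    by (simp add: monotone_on_def)
  moreover have "R > 0"
    using R1[of R1] by (auto simp: R_def less_max_iff_disj)
  then have "continuous_on {R..} H"
    unfolding H_fun_def
    by (intro continuous_intros continuous_on_subset[OF f_cont] continuous_on_subset[OF g_cont]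
        continuous_on_subset[OF eta_cont]) auto
  ultimately show ?thesis
    by blast
qed

lemma H_bounds:
  assumes "0 < \<epsilon>" and "\<epsilon> < 2 - b"
  shows "eventually (\<lambda>r. (f r)\<^sup>2 \<le> H r \<and> H r \<le> f r powr (2 - b - \<epsilon>)) at_top"
proof -
  have "eventually (\<lambda>r. (0 < r \<and> f r < 1) \<and> 1 \<le> r \<and> 1 \<le> \<eta> r \<and> 2 - b - \<epsilon> < H_exponent r) at_top"
    using eventually_f_less_1 eventually_ge_at_top[of 1] eta_ge_1
      order_tendstoD(1)[OF H_exponent_tendsto, of "2 - b - \<epsilon>"] assms
    by (auto simp: eventually_conj_iff)
  then show ?thesis
  proof (rule eventually_mono)
    fix r
    assume r: "(0 < r \<and> f r < 1) \<and> 1 \<le> r \<and> 1 \<le> \<eta> r \<and> 2 - b - \<epsilon> < H_exponent r"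
    have "1 * 1 * 1 \<le> r ^ (d - 1) * \<eta> r * exp (Kt * t * g r)"
      using r g_pos[of r] Ktt_pos by (intro mult_mono) auto
    then have "(f r)\<^sup>2 * 1 \<le> (f r)\<^sup>2 * (r ^ (d - 1) * \<eta> r * exp (Kt * t * g r))"
      by (intro mult_left_mono) auto
    moreover have "f r powr H_exponent r \<le> f r powr (2 - b - \<epsilon>)"
      using r f_pos[of r] by (intro powr_mono') auto
    ultimately show "(f r)\<^sup>2 \<le> H r \<and> H r \<le> f r powr (2 - b - \<epsilon>)"
      using r H_eq_powr[of r] by (simp add: H_fun_def mult.assoc)
  qed
qed

lemma H_bounds_beyond:
  assumes "0 < \<epsilon>" and "\<epsilon> < 2 - b"
  shows "\<exists>r\<epsilon>>0. \<forall>r>r\<epsilon>. (f r)\<^sup>2 \<le> H r \<and> H r \<le> f r powr (2 - b - \<epsilon>)"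
proof -
  obtain N where "\<forall>r\<ge>N. (f r)\<^sup>2 \<le> H r \<and> H r \<le> f r powr (2 - b - \<epsilon>)"
    using H_bounds[OF assms] by (auto simp: eventually_at_top_linorder)
  then show ?thesis
    by (intro exI[of _ "max N 1"]) auto
qed

lemma exp_mult_H_powr_tendsto_0:
  assumes "\<delta> > 0"
  shows "((\<lambda>r. exp (A * g r) * H r powr \<delta>) \<longlongrightarrow> 0) at_top"
proof -
  have "((\<lambda>r. f r powr (\<delta> * H_exponent r - A * (g r / \<bar>ln (f r)\<bar>)))
      \<longlongrightarrow> 0 powr (\<delta> * (2 - b) - A * 0)) at_top"
    using f_tendsto_0 H_exponent_tendsto D_lim assms b_range eventually_f_less_1
    by (intro tendsto_powr' tendsto_intros) (auto elim!: eventually_mono intro: less_imp_le f_pos)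
  moreover have "eventually (\<lambda>r. exp (A * g r) * H r powr \<delta>
      = f r powr (\<delta> * H_exponent r - A * (g r / \<bar>ln (f r)\<bar>))) at_top"
    using eventually_f_less_1
  proof (rule eventually_mono)
    fix r
    assume r: "0 < r \<and> f r < 1"
    then have fr: "0 < f r" "ln (f r) < 0"
      using f_pos by auto
    have "exp (A * g r) = f r powr (- A * (g r / \<bar>ln (f r)\<bar>))"
      using fr by (simp add: powr_def)
    moreover have "H r powr \<delta> = f r powr (H_exponent r * \<delta>)"
      using r by (simp add: H_eq_powr powr_powr)
    ultimately show "exp (A * g r) * H r powr \<delta> = f r powr (\<delta> * H_exponent r - A * (g r / \<bar>ln (f r)\<bar>))"
      by (simp add: powr_add[symmetric] algebra_simps)
  qed
  ultimately show ?thesis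
    by (simp add: tendsto_cong)
qed

end

locale H_profile_inverse = H_profile +
  fixes R1 \<kappa> \<kappa>' \<omega> :: real
  assumes g_mono: "mono_on {0..} g"
    and H_cont_R1: "continuous_on {R1..} (H_fun d Kt t f g \<eta>)"
    and H_anti_R1: "strict_antimono_on {R1..} (H_fun d Kt t f g \<eta>)"
    and kappa_pos: "\<kappa> > 0" "\<kappa>' > 0"
    and omega_cond: "\<And>c l. c > 0 \<Longrightarrow> l \<ge> 1 \<Longrightarrow>
        Limsup (at_right 0) (\<lambda>s. ereal (g (pos_inv f (c * s powr l)) / g (pos_inv f s)))
          \<le> ereal (l powr \<omega>)"
begin

abbreviation \<alpha> :: "real \<Rightarrow> real" where
  "\<alpha> u \<equiv> pos_inv (\<lambda>r. (f r)\<^sup>2) (\<kappa> / u)"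

abbreviation \<gamma> :: "real \<Rightarrow> real" where
  "\<gamma> u \<equiv> inv_into {R1..} H (\<kappa>' / u)"

lemma gamma_eventually: "eventually (\<lambda>u. R1 \<le> \<gamma> u \<and> H (\<gamma> u) = \<kappa>' / u) at_top"
  by (rule inv_into_halfline_eventually[OF H_cont_R1 H_anti_R1 H_tendsto_0
        filterlim_const_divide_at_right_0[OF kappa_pos(2)]])

lemma gamma_at_top: "filterlim \<gamma> at_top at_top"
  by (rule filterlim_inv_into_halfline[OF H_cont_R1 H_anti_R1 H_tendsto_0
        filterlim_const_divide_at_right_0[OF kappa_pos(2)]])

lemma eventually_gamma: "eventually P at_top \<Longrightarrow> eventually (\<lambda>u. P (\<gamma> u)) at_top"
  using gamma_at_top by (simp add: filterlim_iff)

lemma alpha_eq: "u > 0 \<Longrightarrow> \<alpha> u = pos_inv f (sqrt (\<kappa> / u))"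
  using kappa_pos by (intro pos_inv_power2[OF f_bij]) simp

lemma g_alpha_pos: "u > 0 \<Longrightarrow> g (\<alpha> u) > 0"
  using alpha_eq pos_inv_bij_betw(1)[OF f_bij, of "sqrt (\<kappa> / u)"] kappa_pos
  by (simp add: g_pos less_imp_le)

lemma eventually_gamma_solves:
  "eventually (\<lambda>u. 0 < u \<and> 0 < \<gamma> u \<and> H (\<gamma> u) = \<kappa>' / u) at_top"
  using eventually_gt_at_top[of 0] eventually_gamma[OF eventually_gt_at_top[of 0]] gamma_eventually
  by (auto simp: eventually_conj_iff)

lemma pos_inv_le_gamma: "eventually (\<lambda>u. pos_inv f (sqrt (\<kappa>' / u)) \<le> \<gamma> u) at_top"
proof -
  have "eventually (\<lambda>r. (f r)\<^sup>2 \<le> H r) at_top"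
    using H_bounds[of "(2 - b) / 2"] b_range by (auto elim: eventually_mono)
  then have "eventually (\<lambda>u. (f (\<gamma> u))\<^sup>2 \<le> H (\<gamma> u)) at_top"
    by (rule eventually_gamma)
  with eventually_gamma_solves show ?thesis
  proof eventually_elim
    case (elim u)
    then have "f (\<gamma> u) \<le> sqrt (\<kappa>' / u)"
      by (intro real_le_rsqrt) simp
    then show ?case
      using pos_inv_le_iff(1)[OF f_decr f_bij] elim kappa_pos by simp
  qed
qed

lemma gamma_le_pos_inv:
  assumes "0 < \<epsilon>" and "\<epsilon> < 2 - b"
  shows "eventually (\<lambda>u. \<gamma> u \<le> pos_inv f ((\<kappa>' / u) powr (1 / (2 - b - \<epsilon>)))) at_top"
  using eventually_gamma_solves eventually_gamma[OF H_bounds[OF assms]]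
proof eventually_elim
  case (elim u)
  define e where "e = 2 - b - \<epsilon>"
  have "e > 0"
    using assms by (simp add: e_def)
  have "(\<kappa>' / u) powr (1 / e) \<le> (f (\<gamma> u) powr e) powr (1 / e)"
    using elim \<open>e > 0\<close> kappa_pos by (intro powr_mono2) (auto simp: e_def)
  also have "\<dots> = f (\<gamma> u)"
    using \<open>e > 0\<close> f_pos[of "\<gamma> u"] elim by (simp add: powr_powr)
  finally show ?case
    using pos_inv_le_iff(2)[OF f_decr f_bij] elim kappa_pos by (simp add: e_def)
qed

lemma Limsup_ratio_le_eps:
  assumes "0 < \<epsilon>" and "\<epsilon> < 2 - b"
  shows "Limsup at_top (\<lambda>u. ereal (g (\<gamma> u) / g (\<alpha> u))) \<le> ereal ((2 / (2 - b - \<epsilon>)) powr \<omega>)"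
proof -
  define e where "e = 2 - b - \<epsilon>"
  define c where "c = (\<kappa>' / \<kappa>) powr (1 / e)"
  define h where "h s = ereal (g (pos_inv f (c * s powr (2 / e))) / g (pos_inv f s))" for s
  have "e > 0" "c > 0"
    using assms kappa_pos by (simp_all add: e_def c_def)
  have "eventually (\<lambda>u. ereal (g (\<gamma> u) / g (\<alpha> u)) \<le> h (sqrt (\<kappa> / u))) at_top"
    using eventually_gamma_solves gamma_le_pos_inv[OF assms]
  proof eventually_elim
    case (elim u)
    have "(\<kappa>' / u) powr (1 / e) = c * ((\<kappa> / u) powr (1 / 2)) powr (2 / e)"
      using kappa_pos elim by (simp add: c_def powr_powr powr_mult[symmetric])
    then have "\<gamma> u \<le> pos_inv f (c * sqrt (\<kappa> / u) powr (2 / e))"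
      using elim kappa_pos by (simp add: e_def powr_half_sqrt)
    then have "g (\<gamma> u) \<le> g (pos_inv f (c * sqrt (\<kappa> / u) powr (2 / e)))"
      using elim by (intro mono_onD[OF g_mono]) auto
    then show ?case
      using elim g_alpha_pos[of u] alpha_eq[of u] by (simp add: h_def divide_right_mono)
  qed
  then have "Limsup at_top (\<lambda>u. ereal (g (\<gamma> u) / g (\<alpha> u))) \<le> Limsup at_top (\<lambda>u. h (sqrt (\<kappa> / u)))"
    by (rule Limsup_mono)
  also have "\<dots> \<le> Limsup (at_right 0) h"
    by (rule Limsup_compose_le[OF filterlim_sqrt_at_right_0[OF filterlim_const_divide_at_right_0]])
      (use kappa_pos in simp)
  also have "\<dots> \<le> ereal ((2 / e) powr \<omega>)"
    unfolding h_def using \<open>c > 0\<close> \<open>e > 0\<close> b_range assms by (intro omega_cond) (auto simp: e_def)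
  finally show ?thesis
    by (simp add: e_def)
qed

lemma Limsup_ratio_le: "Limsup at_top (\<lambda>u. ereal (g (\<gamma> u) / g (\<alpha> u))) \<le> ereal ((2 / (2 - b)) powr \<omega>)"
proof (rule tendsto_le[OF trivial_limit_at_right_real])
  have "((\<lambda>\<epsilon>. 2 / (2 - b - \<epsilon>)) \<longlongrightarrow> 2 / (2 - b - 0)) (at_right 0)"
    using b_range by (intro tendsto_intros) auto
  then have "((\<lambda>\<epsilon>. (2 / (2 - b - \<epsilon>)) powr \<omega>) \<longlongrightarrow> (2 / (2 - b)) powr \<omega>) (at_right 0)"
    using b_range by (intro tendsto_powr tendsto_const) auto
  then show "((\<lambda>\<epsilon>. ereal ((2 / (2 - b - \<epsilon>)) powr \<omega>)) \<longlongrightarrow> ereal ((2 / (2 - b)) powr \<omega>)) (at_right 0)"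
    by simp
  show "eventually (\<lambda>\<epsilon>. Limsup at_top (\<lambda>u. ereal (g (\<gamma> u) / g (\<alpha> u)))
      \<le> ereal ((2 / (2 - b - \<epsilon>)) powr \<omega>)) (at_right 0)"
    using b_range by (auto simp: eventually_at_right_field intro!: exI[of _ "2 - b"] Limsup_ratio_le_eps)
qed simp

lemma Liminf_ratio_ge_1: "1 \<le> Liminf at_top (\<lambda>u. ereal (g (\<gamma> u) / g (\<alpha> u)))"
proof (rule one_le_Liminf_if_Limsup_inverse_le_one)
  show "eventually (\<lambda>u. g (\<gamma> u) / g (\<alpha> u) > 0) at_top"
    using eventually_gamma_solves by (auto elim!: eventually_mono simp: g_pos g_alpha_pos less_imp_le)
  define c where "c = sqrt (\<kappa> / \<kappa>')"
  define h where "h s = ereal (g (pos_inv f (c * s powr 1)) / g (pos_inv f s))" for s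
  have "eventually (\<lambda>u. ereal (1 / (g (\<gamma> u) / g (\<alpha> u))) \<le> h (sqrt (\<kappa>' / u))) at_top"
    using eventually_gamma_solves pos_inv_le_gamma
  proof eventually_elim
    case (elim u)
    have "c * sqrt (\<kappa>' / u) powr 1 = sqrt (\<kappa> / u)"
      using kappa_pos elim by (simp add: c_def real_sqrt_mult[symmetric])
    then have h_eq: "h (sqrt (\<kappa>' / u)) = ereal (g (\<alpha> u) / g (pos_inv f (sqrt (\<kappa>' / u))))"
      using elim alpha_eq[of u] by (simp add: h_def)
    have "0 < g (pos_inv f (sqrt (\<kappa>' / u)))"
      using pos_inv_bij_betw(1)[OF f_bij, of "sqrt (\<kappa>' / u)"] kappa_pos elim by (simp add: g_pos)
    moreover have "g (pos_inv f (sqrt (\<kappa>' / u))) \<le> g (\<gamma> u)"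
      using elim pos_inv_bij_betw(1)[OF f_bij, of "sqrt (\<kappa>' / u)"] kappa_pos
      by (intro mono_onD[OF g_mono]) auto
    ultimately have "g (\<alpha> u) / g (\<gamma> u) \<le> g (\<alpha> u) / g (pos_inv f (sqrt (\<kappa>' / u)))"
      using g_alpha_pos[of u] elim by (intro divide_left_mono) auto
    then show ?case
      by (simp add: h_eq)
  qed
  then have "Limsup at_top (\<lambda>u. ereal (1 / (g (\<gamma> u) / g (\<alpha> u)))) \<le> Limsup at_top (\<lambda>u. h (sqrt (\<kappa>' / u)))"
    by (rule Limsup_mono)
  also have "\<dots> \<le> Limsup (at_right 0) h"
    by (rule Limsup_compose_le[OF filterlim_sqrt_at_right_0[OF filterlim_const_divide_at_right_0]])
      (use kappa_pos in simp)
  also have "\<dots> \<le> ereal (1 powr \<omega>)"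
    unfolding h_def using kappa_pos by (intro omega_cond) (auto simp: c_def)
  finally show "Limsup at_top (\<lambda>u. ereal (1 / (g (\<gamma> u) / g (\<alpha> u)))) \<le> 1"
    by (simp add: one_ereal_def)
qed

lemma tendsto_gamma_div_powr_0:
  assumes "\<delta> > 0" and F_bound: "eventually (\<lambda>r. 0 \<le> F r \<and> F r \<le> exp (A * g r)) at_top"
  shows "((\<lambda>u. F (\<gamma> u) / u powr \<delta>) \<longlongrightarrow> 0) at_top"
proof (rule Lim_null_comparison)
  show "((\<lambda>u. exp (A * g (\<gamma> u)) * H (\<gamma> u) powr \<delta> / \<kappa>' powr \<delta>) \<longlongrightarrow> 0) at_top"
    by (rule tendsto_divide_zero[OF filterlim_compose[OF exp_mult_H_powr_tendsto_0[OF assms(1)] gamma_at_top]])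
  show "eventually (\<lambda>u. norm (F (\<gamma> u) / u powr \<delta>) \<le> exp (A * g (\<gamma> u)) * H (\<gamma> u) powr \<delta> / \<kappa>' powr \<delta>) at_top"
    using eventually_gamma_solves eventually_gamma[OF F_bound]
  proof eventually_elim
    case (elim u)
    then have "u powr \<delta> = \<kappa>' powr \<delta> / H (\<gamma> u) powr \<delta>"
      using kappa_pos by (simp add: powr_divide)
    then have "norm (F (\<gamma> u) / u powr \<delta>) = F (\<gamma> u) * H (\<gamma> u) powr \<delta> / \<kappa>' powr \<delta>"
      using elim kappa_pos by simp
    also have "\<dots> \<le> exp (A * g (\<gamma> u)) * H (\<gamma> u) powr \<delta> / \<kappa>' powr \<delta>"
      using elim by (intro divide_right_mono mult_right_mono) auto
    finally show ?case .
  qed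
qed

lemma tendsto_gamma_div_g_alpha_0:
  assumes "((\<lambda>r. q r / g r) \<longlongrightarrow> 0) at_top"
  shows "((\<lambda>u. q (\<gamma> u) / g (\<alpha> u)) \<longlongrightarrow> 0) at_top"
proof -
  define B where "B = (2 / (2 - b)) powr \<omega> + 1"
  have "Limsup at_top (\<lambda>u. ereal (g (\<gamma> u) / g (\<alpha> u))) < ereal B"
    using Limsup_ratio_le by (rule order.strict_trans1) (simp add: B_def)
  then have "eventually (\<lambda>u. g (\<gamma> u) / g (\<alpha> u) < B) at_top"
    by (auto dest: Limsup_lessD)
  with eventually_gamma_solves have bounded: "eventually (\<lambda>u. norm (g (\<gamma> u) / g (\<alpha> u)) \<le> B) at_top"
    by eventually_elim (simp add: g_pos g_alpha_pos less_imp_le)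
  have "((\<lambda>u. q (\<gamma> u) / g (\<gamma> u) * (g (\<gamma> u) / g (\<alpha> u))) \<longlongrightarrow> 0) at_top"
    by (rule lim_null_mult_right_bounded[OF filterlim_compose[OF assms gamma_at_top] bounded])
  moreover have "eventually (\<lambda>u. q (\<gamma> u) / g (\<gamma> u) * (g (\<gamma> u) / g (\<alpha> u)) = q (\<gamma> u) / g (\<alpha> u)) at_top"
    using eventually_gamma_solves
  proof eventually_elim
    case (elim u)
    then have "g (\<gamma> u) > 0"
      using g_pos by simp
    then show ?case
      by simp
  qed
  ultimately show ?thesis
    by (rule Lim_transform_eventually)
qed

lemma w_fun_gamma_tendsto:
  assumes "\<delta> > 0"
  shows "((\<lambda>u. w_fun Kt t g (\<gamma> u) / u powr \<delta>) \<longlongrightarrow> 0) at_top"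
proof (rule tendsto_gamma_div_powr_0[OF assms])
  have w_bound: "0 \<le> w_fun Kt t g r \<and> w_fun Kt t g r \<le> exp ((2 + Kt * t) * g r)" if "r \<ge> 0" for r
  proof
    show "0 \<le> w_fun Kt t g r"
      by (simp add: w_fun_def)
    show "w_fun Kt t g r \<le> exp ((2 + Kt * t) * g r)"
      using g_pos[OF that] by (intro w_fun_le_exp) simp
  qed
  show "eventually (\<lambda>r. 0 \<le> w_fun Kt t g r \<and> w_fun Kt t g r \<le> exp ((2 + Kt * t) * g r)) at_top"
    using eventually_ge_at_top[of 0] by (rule eventually_mono) (rule w_bound)
qed

lemma v_fun_gamma_tendsto:
  assumes "\<And>r. r \<ge> 1 \<Longrightarrow> \<sigma> r < r" and "((\<lambda>r. (ln (\<eta> r) - ln (r - \<sigma> r)) / g r) \<longlongrightarrow> 0) at_top"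
    and "\<delta> > 0"
  shows "((\<lambda>u. v_fun Kt t g \<eta> \<sigma> (\<gamma> u) / u powr \<delta>) \<longlongrightarrow> 0) at_top"
proof (rule tendsto_gamma_div_powr_0[OF \<open>\<delta> > 0\<close>])
  show "eventually (\<lambda>r. 0 \<le> v_fun Kt t g \<eta> \<sigma> r \<and> v_fun Kt t g \<eta> \<sigma> r \<le> exp ((3 + Kt * t) * g r)) at_top"
    using eventually_ge_at_top[of 1] order_tendstoD(2)[OF assms(2) zero_less_one]
  proof eventually_elim
    case (elim r)
    then have "ln (\<eta> r) - ln (r - \<sigma> r) \<le> g r"
      using g_pos[of r] by (simp add: divide_less_eq)
    moreover have "0 < \<eta> r" "0 < g r" "\<sigma> r < r"
      using elim assms(1)[of r] g_pos[of r] eta_pos[of r] by auto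
    ultimately have "v_fun Kt t g \<eta> \<sigma> r \<le> exp ((3 + Kt * t) * g r)"
      by (intro v_fun_le_exp) auto
    moreover have "0 \<le> v_fun Kt t g \<eta> \<sigma> r"
      using \<open>0 < \<eta> r\<close> \<open>\<sigma> r < r\<close> by (simp add: v_fun_def w_fun_def)
    ultimately show ?case
      by simp
  qed
qed

end

theorem lemma5p1:
  fixes f g \<eta> \<sigma> :: "real \<Rightarrow> real"
    and Kt t \<omega> b \<kappa> \<kappa>' R0 :: real
    and X :: "'a::euclidean_space itself"
  defines "d \<equiv> DIM('a)"
  assumes
    \<comment> \<open>(A): properties of the profile f of the Levy density\<close>
    f_pos: "\<And>r. r > 0 \<Longrightarrow> f r > 0"
    and f_cont: "continuous_on {0<..} f"
    and f_decr: "strict_antimono_on {0<..} f"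
    and f_bij: "bij_betw f {0<..} {0<..}"
    and f_levy: "(\<integral>\<^sup>+ z. indicator (- {0}) z * ennreal (min 1 ((norm z)^2) * f (norm z))
                   \<partial>(lborel :: 'a measure)) < \<infinity>"
    and f_inf: "(\<integral>\<^sup>+ z. indicator (- {0}) z * ennreal (f (norm z)) \<partial>(lborel :: 'a measure)) = \<infinity>"
    \<comment> \<open>(A1)\<close>
    and A1: "\<exists>C3>0. \<forall>x::'a. norm x \<ge> 1 \<longrightarrow>
               (\<integral>\<^sup>+ y. indicator {y. norm (x - y) > 1 \<and> norm y > 1} y
                   * ennreal (f (norm (x - y)) * f (norm y)) \<partial>(lborel :: 'a measure))
               \<le> ennreal (C3 * f (norm x))"
    \<comment> \<open>(A): properties of the profile g of the potential, and (A3)\<close>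
    and g_pos: "\<And>r. r \<ge> 0 \<Longrightarrow> g r > 0"
    and g_cont: "continuous_on {0..} g"
    and g_incr: "strict_mono_on {0..} g"
    and R0_pos: "R0 > 0"
    and A3: "\<exists>C6\<ge>1. \<forall>r\<ge>R0. g (r + 1) \<le> C6 * g r"
    \<comment> \<open>(D)\<close>
    and D_mono: "\<exists>r0. \<forall>r\<ge>r0. \<forall>s\<ge>r. g s / \<bar>ln (f s)\<bar> \<le> g r / \<bar>ln (f r)\<bar>"
    and D_lim: "((\<lambda>r. g r / \<bar>ln (f r)\<bar>) \<longlongrightarrow> 0) at_top"
    \<comment> \<open>the constant Ktilde of the heat kernel lower bound\<close>
    and Kt_pos: "Kt > 0"
    \<comment> \<open>growth condition with exponent omega\<close>
    and omega_nonneg: "\<omega> \<ge> 0"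
    and omega_cond: "\<And>c l. c > 0 \<Longrightarrow> l \<ge> 1 \<Longrightarrow>
        Limsup (at_right 0) (\<lambda>s. ereal (g (pos_inv f (c * s powr l)) / g (pos_inv f s)))
          \<le> ereal (l powr \<omega>)"
    and t_pos: "t > 0"
    \<comment> \<open>eta and sigma\<close>
    and eta_pos: "\<And>r. r \<ge> 0 \<Longrightarrow> \<eta> r > 0"
    and eta_cont: "continuous_on {0..} \<eta>"
    and eta_mono: "mono_on {0..} \<eta>"
    and eta_L1: "set_integrable lborel {1<..} (\<lambda>x. 1 / \<eta> x)"
    and sigma_pos: "\<And>r. r \<ge> 0 \<Longrightarrow> \<sigma> r > 0"
    and sigma_cont: "continuous_on {0..} \<sigma>"
    and sigma_mono: "mono_on {0..} \<sigma>"
    and sigma_less: "\<And>r. r \<ge> 1 \<Longrightarrow> \<sigma> r < r"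
    and sigma_bdd: "\<exists>M. \<forall>r\<ge>1. f (\<sigma> r) / f r \<le> M"
    and b_mono: "\<exists>r0. \<forall>r\<ge>r0. \<forall>s\<ge>r.
        ((real d - 1) * ln s + ln (\<eta> s)) / \<bar>ln (f s)\<bar>
          \<le> ((real d - 1) * ln r + ln (\<eta> r)) / \<bar>ln (f r)\<bar>"
    and b_lim: "((\<lambda>r. ((real d - 1) * ln r + ln (\<eta> r)) / \<bar>ln (f r)\<bar>) \<longlongrightarrow> b) at_top"
    and b_range: "0 \<le> b" "b < 2"
    and kappa_pos: "\<kappa> > 0" "\<kappa>' > 0"
  shows
    \<comment> \<open>existence of a half-line on which H_t is continuous and strictly decreasing\<close>
    "(\<exists>R1. continuous_on {R1..} (H_fun d Kt t f g \<eta>)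
           \<and> strict_antimono_on {R1..} (H_fun d Kt t f g \<eta>))
     \<and> (\<forall>R1. continuous_on {R1..} (H_fun d Kt t f g \<eta>)
           \<and> strict_antimono_on {R1..} (H_fun d Kt t f g \<eta>) \<longrightarrow>
       (let H = H_fun d Kt t f g \<eta>;
            \<alpha> = (\<lambda>u. pos_inv (\<lambda>r. (f r)^2) (\<kappa> / u));
            \<gamma> = (\<lambda>u. inv_into {R1..} H (\<kappa>' / u))
        in
        \<comment> \<open>(a)\<close>
        (\<forall>\<epsilon>. 0 < \<epsilon> \<and> \<epsilon> < 2 - b \<longrightarrow>
           (\<exists>r\<epsilon>>0. \<forall>r>r\<epsilon>. (f r)^2 \<le> H r \<and> H r \<le> f r powr (2 - b - \<epsilon>)))
        \<and> 1 \<le> Liminf at_top (\<lambda>u. ereal (g (\<gamma> u) / g (\<alpha> u)))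
        \<and> Liminf at_top (\<lambda>u. ereal (g (\<gamma> u) / g (\<alpha> u)))
            \<le> Limsup at_top (\<lambda>u. ereal (g (\<gamma> u) / g (\<alpha> u)))
        \<and> Limsup at_top (\<lambda>u. ereal (g (\<gamma> u) / g (\<alpha> u))) \<le> ereal ((2 / (2 - b)) powr \<omega>)
        \<and> (\<forall>\<delta>>0. ((\<lambda>u. w_fun Kt t g (\<gamma> u) / u powr \<delta>) \<longlongrightarrow> 0) at_top)
        \<comment> \<open>(b)\<close>
        \<and> (((\<lambda>r. (ln (\<eta> r) - ln (r - \<sigma> r)) / g r) \<longlongrightarrow> 0) at_top \<longrightarrow>
             ((\<lambda>u. (ln (\<eta> (\<gamma> u)) - ln (\<gamma> u - \<sigma> (\<gamma> u))) / g (\<alpha> u)) \<longlongrightarrow> 0) at_top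
           \<and> (\<forall>\<delta>>0. ((\<lambda>u. v_fun Kt t g \<eta> \<sigma> (\<gamma> u) / u powr \<delta>) \<longlongrightarrow> 0) at_top))))"
proof -
  have "d \<ge> 1"
    unfolding d_def using DIM_positive[where 'a = 'a] by linarith
  have "eventually (\<lambda>r. 1 \<le> \<eta> r) at_top"
    using filterlim_at_top_if_integrable_inverse[OF eta_mono eta_pos eta_L1]
    by (simp add: filterlim_at_top)
  then interpret H_profile d Kt t b f g \<eta>
    using \<open>d \<ge> 1\<close> Kt_pos t_pos f_cont f_decr f_bij g_pos g_cont eta_pos eta_cont
      D_mono D_lim b_mono b_lim b_range
    by unfold_locales auto
  show ?thesis
    unfolding Let_def
    apply (intro conjI[OF ex_halfline_strict_antimono] allI impI)
    subgoal premises halfline for R1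
    proof -
      interpret H_profile_inverse d Kt t b f g \<eta> R1 \<kappa> \<kappa>' \<omega>
        using halfline g_incr kappa_pos omega_cond
        by unfold_locales (auto intro: strict_mono_on_imp_mono_on)
      show ?thesis
        using H_bounds_beyond Liminf_ratio_ge_1 Limsup_ratio_le w_fun_gamma_tendsto
          tendsto_gamma_div_g_alpha_0 v_fun_gamma_tendsto[OF sigma_less]
        by (auto intro: Liminf_le_Limsup)
    qed
    done
qed

end
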